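(* Let $h:\Gamma\to\mathbb{T}A$ be a connected parametrized tropical curve without contracted edges, $\mathcal{Q}=\{p_1,\dots,p_x\}$ a lifting set, and $\tilde h:\widetilde\Gamma\to N_\mathbb{R}$ the lifted planar tropical curve, with paired unbounded ends $e_i,f_i$ of outgoing slopes $n_i,-n_i$ coming from $p_i$ and with $\gamma_i\in\Lambda$ the class of the loop associated to the pair $(e_i,f_i)$ (projection of a path in $\widetilde\Gamma$ from $e_i$ to $f_i$). Then every small deformation of $h$ (in the same combinatorial type) lifts to a small deformation of $\tilde h$. Conversely, a small deformation of $\tilde h$ (same combinatorial type, same slopes) descends to a deformation of $h:\Gamma\to\mathbb{T}A$ if and only if for every $i=1,\dots,x$ it satisfies $$\det(n_i,e_i)+\det(-n_i,f_i)=\det(n_i,S\gamma_i),$$ where $\det(n,e)$ denotes the moment $\det(n,z)$, $z\in\tilde h(e)$, of an unbounded end $e$ of slope $n$.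
   Context: $N$ is an oriented rank $2$ lattice, $N_\mathbb{R}=N\otimes\mathbb{R}$. A tropical torus is $\mathbb{T}A=N_\mathbb{R}/\Lambda$ with injective $S:\Lambda\to N_\mathbb{R}$ whose image is a full-rank lattice. A parametrized tropical curve $h:\Gamma\to\mathbb{T}A$ is a map from a compact connected finite metric graph, affine on edges with slopes in $N$, balanced at each vertex; an edge is contracted if its slope is $0$. A finite set $\mathcal{Q}$ of points in the interiors of edges of $\Gamma$ is lifting if $h_*:\pi_1(\Gamma\setminus\mathcal{Q})\to\pi_1(\mathbb{T}A)=\Lambda$ is trivial; the lift $\tilde h:\widetilde\Gamma\to N_\mathbb{R}$ is obtained by lifting $h|_{\Gamma\setminus\mathcal{Q}}$ to $N_\mathbb{R}$ and prolonging each cut half-edge to an unbounded ray of the same slope. A deformation is a continuous family of parametrized tropical curves of the same combinatorial type (same graph, same slopes, varying edge lengths and position). *)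

theory Defs
  imports "HOL-Analysis.Analysis"
begin

text \<open>Vectors of N_R = R^2 (N = Z^2 with its standard orientation).\<close>
type_synonym vec = "real \<times> real"

definition det2 :: "vec \<Rightarrow> vec \<Rightarrow> real" where
  "det2 a b = fst a * snd b - snd a * fst b"

definition rvec :: "int \<times> int \<Rightarrow> vec" where
  "rvec n = (real_of_int (fst n), real_of_int (snd n))"

text \<open>Lambda = Z^2; S given by the images u, v of the two basis vectors.
  S is injective with full-rank image iff det2 u v is nonzero.\<close>
definition Smap :: "vec \<Rightarrow> vec \<Rightarrow> int \<times> int \<Rightarrow> vec" where
  "Smap u v g = real_of_int (fst g) *\<^sub>R u + real_of_int (snd g) *\<^sub>R v"

definition lattice :: "vec \<Rightarrow> vec \<Rightarrow> vec set" where
  "lattice u v = range (Smap u v)"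

text \<open>Oriented walks in the graph with edge set F: a list of (edge, forward?) pairs.\<close>
fun walk :: "('e \<Rightarrow> 'v) \<Rightarrow> ('e \<Rightarrow> 'v) \<Rightarrow> 'e set \<Rightarrow> 'v \<Rightarrow> ('e \<times> bool) list \<Rightarrow> 'v \<Rightarrow> bool" where
  "walk s t F a [] b = (a = b)"
| "walk s t F a ((e, d) # w) b =
     (e \<in> F \<and> (if d then s e = a \<and> walk s t F (t e) w b
                    else t e = a \<and> walk s t F (s e) w b))"

text \<open>Displacement in N_R of the lift of (the image under h of) a walk.\<close>
definition walk_disp :: "('e \<Rightarrow> real) \<Rightarrow> ('e \<Rightarrow> int \<times> int) \<Rightarrow> ('e \<times> bool) list \<Rightarrow> vec" where
  "walk_disp len \<sigma> w = (\<Sum>(e, d) \<leftarrow> w. (if d then len e else - len e) *\<^sub>R rvec (\<sigma> e))"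

definition trop_type :: "'v set \<Rightarrow> 'e set \<Rightarrow> ('e \<Rightarrow> 'v) \<Rightarrow> ('e \<Rightarrow> 'v) \<Rightarrow> ('e \<Rightarrow> int \<times> int) \<Rightarrow> bool" where
  "trop_type V E s t \<sigma> \<longleftrightarrow> finite V \<and> finite E \<and> V \<noteq> {} \<and>
     (\<forall>e\<in>E. s e \<in> V \<and> t e \<in> V) \<and>
     (\<forall>v\<in>V. (\<Sum>e\<in>E. (if s e = v then \<sigma> e else 0) + (if t e = v then - \<sigma> e else 0)) = 0)"

definition connected_graph :: "'v set \<Rightarrow> 'e set \<Rightarrow> ('e \<Rightarrow> 'v) \<Rightarrow> ('e \<Rightarrow> 'v) \<Rightarrow> bool" where
  "connected_graph V E s t \<longleftrightarrow> (\<forall>a\<in>V. \<forall>b\<in>V. \<exists>w. walk s t E a w b)"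

definition no_contracted_edges :: "'e set \<Rightarrow> ('e \<Rightarrow> int \<times> int) \<Rightarrow> bool" where
  "no_contracted_edges E \<sigma> \<longleftrightarrow> (\<forall>e\<in>E. \<sigma> e \<noteq> 0)"

text \<open>A parametrized tropical curve h : Gamma -> TA of the given type: edge lengths and
  images of the vertices (represented by points of N_R; a point is only relevant mod S Lambda).
  The edge e is the affine map t |-> pos (src e) + t * sigma e, t in [0, length e], mod S Lambda.\<close>
definition torus_curve :: "vec \<Rightarrow> vec \<Rightarrow> 'v set \<Rightarrow> 'e set \<Rightarrow> ('e \<Rightarrow> 'v) \<Rightarrow> ('e \<Rightarrow> 'v) \<Rightarrow>
    ('e \<Rightarrow> int \<times> int) \<Rightarrow> ('e \<Rightarrow> real) \<Rightarrow> ('v \<Rightarrow> vec) \<Rightarrow> bool" where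
  "torus_curve u v V E s t \<sigma> len pos \<longleftrightarrow>
     (\<forall>e\<in>E. len e > 0 \<and> pos (t e) - pos (s e) - len e *\<^sub>R rvec (\<sigma> e) \<in> lattice u v)"

text \<open>Edges of Gamma containing a point of the lifting set Q = {p_i : i < x};
  p_i lies on edge qe i at distance qt i from src (qe i).\<close>
definition cut_edges :: "nat \<Rightarrow> (nat \<Rightarrow> 'e) \<Rightarrow> 'e set" where
  "cut_edges x qe = qe ` {..<x}"

text \<open>Lifting set: h_* : pi_1(Gamma \ Q) -> Lambda trivial, i.e. every closed walk in the
  graph with the cut edges removed has lifted displacement 0.\<close>
definition lifting_set :: "'v set \<Rightarrow> 'e set \<Rightarrow> ('e \<Rightarrow> 'v) \<Rightarrow> ('e \<Rightarrow> 'v) \<Rightarrow> ('e \<Rightarrow> int \<times> int) \<Rightarrow>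
    ('e \<Rightarrow> real) \<Rightarrow> nat \<Rightarrow> (nat \<Rightarrow> 'e) \<Rightarrow> (nat \<Rightarrow> real) \<Rightarrow> bool" where
  "lifting_set V E s t \<sigma> len x qe qt \<longleftrightarrow>
     inj_on qe {..<x} \<and> cut_edges x qe \<subseteq> E \<and>
     (\<forall>i<x. 0 < qt i \<and> qt i < len (qe i)) \<and>
     (\<forall>a\<in>V. \<forall>w. walk s t (E - cut_edges x qe) a w a \<longrightarrow> walk_disp len \<sigma> w = 0)"

text \<open>Planar tropical curve of the lifted type: bounded edges F (with lengths), vertices V at
  positions P; the unbounded ends are the rays e_i = P (src (qe i)) + R_{>=0} n_i and
  f_i = P (tgt (qe i)) + R_{>=0} (- n_i), with n_i = sigma (qe i).\<close>
definition planar_curve :: "'v set \<Rightarrow> 'e set \<Rightarrow> ('e \<Rightarrow> 'v) \<Rightarrow> ('e \<Rightarrow> 'v) \<Rightarrow>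
    ('e \<Rightarrow> int \<times> int) \<Rightarrow> ('e \<Rightarrow> real) \<Rightarrow> ('v \<Rightarrow> vec) \<Rightarrow> bool" where
  "planar_curve V F s t \<sigma> len P \<longleftrightarrow>
     (\<forall>e\<in>F. len e > 0 \<and> P (t e) = P (s e) + len e *\<^sub>R rvec (\<sigma> e))"

definition is_lift :: "vec \<Rightarrow> vec \<Rightarrow> 'v set \<Rightarrow> 'e set \<Rightarrow> ('e \<Rightarrow> 'v) \<Rightarrow> ('e \<Rightarrow> 'v) \<Rightarrow>
    ('e \<Rightarrow> int \<times> int) \<Rightarrow> 'e set \<Rightarrow> ('e \<Rightarrow> real) \<Rightarrow> ('v \<Rightarrow> vec) \<Rightarrow>
    ('e \<Rightarrow> real) \<Rightarrow> ('v \<Rightarrow> vec) \<Rightarrow> bool" where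
  "is_lift u v V E s t \<sigma> C len pos lent P \<longleftrightarrow>
     planar_curve V (E - C) s t \<sigma> lent P \<and>
     (\<forall>e\<in>E - C. lent e = len e) \<and> (\<forall>w\<in>V. P w - pos w \<in> lattice u v)"

text \<open>gamma_i: class in Lambda of the loop obtained by projecting a path in the lifted graph
  from the end e_i to the end f_i (convention: S gamma_i = z_{e_i} - z_{f_i}, where
  z_{e_i}, z_{f_i} are the two lifts of p_i).\<close>
definition loop_class :: "vec \<Rightarrow> vec \<Rightarrow> 'e set \<Rightarrow> ('e \<Rightarrow> 'v) \<Rightarrow> ('e \<Rightarrow> 'v) \<Rightarrow> ('e \<Rightarrow> int \<times> int) \<Rightarrow>
    ('e \<Rightarrow> real) \<Rightarrow> nat \<Rightarrow> (nat \<Rightarrow> 'e) \<Rightarrow> nat \<Rightarrow> int \<times> int \<Rightarrow> bool" where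
  "loop_class u v E s t \<sigma> len x qe i g \<longleftrightarrow>
     (\<exists>w. walk s t (E - cut_edges x qe) (s (qe i)) w (t (qe i)) \<and>
          Smap u v g = len (qe i) *\<^sub>R rvec (\<sigma> (qe i)) - walk_disp len \<sigma> w)"

definition torus_deformation :: "vec \<Rightarrow> vec \<Rightarrow> 'v set \<Rightarrow> 'e set \<Rightarrow> ('e \<Rightarrow> 'v) \<Rightarrow> ('e \<Rightarrow> 'v) \<Rightarrow>
    ('e \<Rightarrow> int \<times> int) \<Rightarrow> ('e \<Rightarrow> real) \<Rightarrow> ('v \<Rightarrow> vec) \<Rightarrow>
    (real \<Rightarrow> 'e \<Rightarrow> real) \<Rightarrow> (real \<Rightarrow> 'v \<Rightarrow> vec) \<Rightarrow> bool" where
  "torus_deformation u v V E s t \<sigma> len pos L Pos \<longleftrightarrow>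
     (\<forall>e\<in>E. continuous_on {0..1} (\<lambda>r. L r e) \<and> L 0 e = len e) \<and>
     (\<forall>w\<in>V. continuous_on {0..1} (\<lambda>r. Pos r w) \<and> Pos 0 w = pos w) \<and>
     (\<forall>r\<in>{0..1}. torus_curve u v V E s t \<sigma> (L r) (Pos r))"

definition planar_deformation :: "'v set \<Rightarrow> 'e set \<Rightarrow> ('e \<Rightarrow> 'v) \<Rightarrow> ('e \<Rightarrow> 'v) \<Rightarrow>
    ('e \<Rightarrow> int \<times> int) \<Rightarrow> ('e \<Rightarrow> real) \<Rightarrow> ('v \<Rightarrow> vec) \<Rightarrow>
    (real \<Rightarrow> 'e \<Rightarrow> real) \<Rightarrow> (real \<Rightarrow> 'v \<Rightarrow> vec) \<Rightarrow> bool" where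
  "planar_deformation V F s t \<sigma> len P L Q \<longleftrightarrow>
     (\<forall>e\<in>F. continuous_on {0..1} (\<lambda>r. L r e) \<and> L 0 e = len e) \<and>
     (\<forall>w\<in>V. continuous_on {0..1} (\<lambda>r. Q r w) \<and> Q 0 w = P w) \<and>
     (\<forall>r\<in>{0..1}. planar_curve V F s t \<sigma> (L r) (Q r))"

definition deform_within :: "'v set \<Rightarrow> 'e set \<Rightarrow> real \<Rightarrow> ('e \<Rightarrow> real) \<Rightarrow> ('v \<Rightarrow> vec) \<Rightarrow>
    (real \<Rightarrow> 'e \<Rightarrow> real) \<Rightarrow> (real \<Rightarrow> 'v \<Rightarrow> vec) \<Rightarrow> bool" where
  "deform_within V F eps len P L Q \<longleftrightarrow>
     (\<forall>r\<in>{0..1}. (\<forall>e\<in>F. \<bar>L r e - len e\<bar> < eps) \<and> (\<forall>w\<in>V. norm (Q r w - P w) < eps))"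

end

(*
  The lattice S Lambda is countable, so a continuous family of lattice vectors over [0,1] is
  constant. Along a deformation of h this freezes the lattice offset P w - pos w of every vertex
  and the lattice defect pos (t e) - pos (s e) - len e n_e of every edge, so a deformation of h
  lifts by translating each vertex by its original offset. For a deformation Pt of the lift the
  same bookkeeping shows that it descends exactly when, for every cut edge e carrying p_i, the
  vector Pt (t e) - Pt (s e) + S gamma_i is a positive multiple of n_i, the multiple being the
  new length of e. Positivity is automatic for small deformations, and parallelism to n_i is
  the moment condition.
*)
theory Submission
  imports Defs
begin

lemma continuous_countable_range_constant:
  fixes f :: "'a::topological_space \<Rightarrow> 'b::metric_space"
  assumes "connected S" "continuous_on S f" "countable (f ` S)" "a \<in> S" "b \<in> S"
  shows "f a = f b"
proof -
  have "connected (f ` S)"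
    by (rule connected_continuous_image[OF assms(2,1)])
  then obtain c where "f ` S \<subseteq> {c}"
    using connected_card_eq_iff_nontrivial assms(3) by blast
  with assms(4,5) show ?thesis by blast
qed

lemma countable_lattice [simp]: "countable (lattice u v)"
  unfolding lattice_def by simp

lemma lattice_path_constant:
  assumes "continuous_on {0..1} f" "f ` {0..1} \<subseteq> lattice u v" "r \<in> {0..1::real}"
  shows "f r = f 0"
  using assms countable_subset[OF assms(2)]
  by (intro continuous_countable_range_constant[of "{0..1}"]) auto

lemma finite_positive_lower_bound:
  fixes f :: "'a \<Rightarrow> real"
  assumes "finite A" "\<And>a. a \<in> A \<Longrightarrow> 0 < f a"
  shows "\<exists>m>0. \<forall>a\<in>A. m \<le> f a"
  using assms
proof (induction rule: finite_induct)
  case empty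
  show ?case by (intro exI[of _ 1]) simp
next
  case (insert b A)
  then obtain m where "m > 0" "\<forall>a\<in>A. m \<le> f a" by blast
  with insert.prems show ?case by (intro exI[of _ "min m (f b)"]) auto
qed

lemma det2_eq_0_imp_parallel:
  assumes "det2 n y = 0" "n \<noteq> 0"
  shows "y = (inner n y / inner n n) *\<^sub>R n"
proof -
  obtain a b c d where n: "n = (a, b)" and y: "y = (c, d)" by fastforce
  have det: "a * d - b * c = 0"
    using assms(1) by (simp add: n y det2_def)
  have "inner n n \<noteq> 0"
    using assms(2) by simp
  then have nonzero: "a * a + b * b \<noteq> 0"
    by (simp add: n)
  have "c * (a * a + b * b) = (a * c + b * d) * a"
    using det by (simp add: algebra_simps)
  moreover have "d * (a * a + b * b) = (a * c + b * d) * b"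
    using det by (simp add: algebra_simps)
  ultimately show ?thesis
    using nonzero by (simp add: n y field_simps)
qed

lemma inner_pos_if_near_multiple:
  fixes n y :: "'a::real_inner"
  assumes "norm (y - l *\<^sub>R n) < l * norm n"
  shows "0 < inner n y"
proof -
  have "0 < l * norm n"
    using assms norm_ge_zero[of "y - l *\<^sub>R n"] by linarith
  then have "0 < norm n"
    by (cases "norm n = 0") simp_all
  have "- inner n (y - l *\<^sub>R n) \<le> norm n * norm (y - l *\<^sub>R n)"
    using Cauchy_Schwarz_ineq2[of n "y - l *\<^sub>R n"] by linarith
  also have "\<dots> < norm n * (l * norm n)"
    using assms \<open>0 < norm n\<close> by simp
  also have "\<dots> = inner n (l *\<^sub>R n)"
    by (simp add: dot_square_norm power2_eq_square)
  finally show ?thesis by (simp add: inner_diff_right)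
qed

lemma one_le_norm_rvec:
  assumes "k \<noteq> 0"
  shows "1 \<le> norm (rvec k)"
proof -
  obtain a b where k: "k = (a, b)" by fastforce
  have "0 < a\<^sup>2 + b\<^sup>2"
    using assms by (simp add: k sum_power2_gt_zero_iff zero_prod_def)
  then have "1 \<le> (real_of_int a)\<^sup>2 + (real_of_int b)\<^sup>2"
    by (metis of_int_add of_int_power int_one_le_iff_zero_less of_int_le_iff of_int_1)
  then show ?thesis by (simp add: k rvec_def norm_Pair)
qed

lemma planar_curve_walk_disp:
  assumes "planar_curve V F s t \<sigma> len P" "walk s t F a w b"
  shows "P b - P a = walk_disp len \<sigma> w"
  using assms(2)
proof (induction w arbitrary: a)
  case Nil
  then show ?case by (simp add: walk_disp_def)
next
  case (Cons step w)
  obtain e d where step: "step = (e, d)" by fastforce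
  show ?case
  proof (cases d)
    case True
    with Cons.prems step have "e \<in> F" "s e = a" "walk s t F (t e) w b" by auto
    with Cons.IH[of "t e"] assms(1) show ?thesis
      using step True by (auto simp: walk_disp_def planar_curve_def algebra_simps)
  next
    case False
    with Cons.prems step have "e \<in> F" "t e = a" "walk s t F (s e) w b" by auto
    with Cons.IH[of "s e"] assms(1) show ?thesis
      using step False by (auto simp: walk_disp_def planar_curve_def algebra_simps)
  qed
qed

lemma rvec_eq_0_iff [simp]: "rvec k = 0 \<longleftrightarrow> k = 0"
  by (simp add: rvec_def zero_prod_def prod_eq_iff)

lemma det2_scaleR_self [simp]: "det2 n (c *\<^sub>R n) = 0"
  by (simp add: det2_def)

lemma det2_moment_eq_iff: "det2 n a + det2 (- n) b = det2 n g \<longleftrightarrow> det2 n (b - a + g) = 0"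
  by (auto simp: det2_def algebra_simps)

lemma torus_deformation_edge_offset_constant:
  assumes "torus_deformation u v V E s t \<sigma> len pos L Pos"
    and "e \<in> E" "s e \<in> V" "t e \<in> V" "r \<in> {0..1}"
  shows "Pos r (t e) - Pos r (s e) - L r e *\<^sub>R rvec (\<sigma> e)
       = pos (t e) - pos (s e) - len e *\<^sub>R rvec (\<sigma> e)"
proof -
  let ?offset = "\<lambda>r. Pos r (t e) - Pos r (s e) - L r e *\<^sub>R rvec (\<sigma> e)"
  have "continuous_on {0..1} ?offset"
    using assms(1-4) unfolding torus_deformation_def by (auto intro!: continuous_intros)
  moreover have "?offset ` {0..1} \<subseteq> lattice u v"
    using assms(1,2) unfolding torus_deformation_def torus_curve_def by auto
  ultimately have "?offset r = ?offset 0"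
    using assms(5) by (rule lattice_path_constant)
  then show ?thesis
    using assms(1-4) unfolding torus_deformation_def by simp
qed

locale lifted_torus_curve =
  fixes u v :: vec and V :: "'v set" and E :: "'e set" and s t :: "'e \<Rightarrow> 'v"
    and \<sigma> :: "'e \<Rightarrow> int \<times> int" and C :: "'e set"
    and len :: "'e \<Rightarrow> real" and pos :: "'v \<Rightarrow> vec" and P :: "'v \<Rightarrow> vec"
  assumes ends_in_vertices: "e \<in> E \<Longrightarrow> s e \<in> V \<and> t e \<in> V"
    and cut_subset: "C \<subseteq> E"
    and curve: "torus_curve u v V E s t \<sigma> len pos"
    and lift: "is_lift u v V E s t \<sigma> C len pos len P"
begin

text \<open>For the cut edge carrying p_i this is z_{e_i} - z_{f_i}, the difference of the two
  lifts of p_i, that is S gamma_i.\<close>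
definition cut_gap :: "'e \<Rightarrow> vec" where
  "cut_gap e = len e *\<^sub>R rvec (\<sigma> e) - (P (t e) - P (s e))"

lemma cut_gap_uncut: "e \<in> E - C \<Longrightarrow> cut_gap e = 0"
  using lift unfolding is_lift_def planar_curve_def cut_gap_def by auto

lemma loop_class_cut_gap:
  assumes "C = cut_edges x qe" "loop_class u v E s t \<sigma> len x qe i g"
  shows "Smap u v g = cut_gap (qe i)"
proof -
  obtain w where w: "walk s t (E - C) (s (qe i)) w (t (qe i))"
    and g: "Smap u v g = len (qe i) *\<^sub>R rvec (\<sigma> (qe i)) - walk_disp len \<sigma> w"
    using assms unfolding loop_class_def by blast
  have "planar_curve V (E - C) s t \<sigma> len P"
    using lift unfolding is_lift_def by blast
  with w g show ?thesis
    unfolding cut_gap_def by (simp add: planar_curve_walk_disp)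
qed

lemma lift_torus_deformation:
  assumes deform: "torus_deformation u v V E s t \<sigma> len pos L Pos"
  defines "Pt \<equiv> \<lambda>r w. P w + (Pos r w - pos w)"
  shows "planar_deformation V (E - C) s t \<sigma> len P L Pt"
    and "\<forall>r\<in>{0..1}. is_lift u v V E s t \<sigma> C (L r) (Pos r) (L r) (Pt r)"
    and "deform_within V E eps len pos L Pos \<Longrightarrow> deform_within V (E - C) eps len P L Pt"
proof -
  have planar: "planar_curve V (E - C) s t \<sigma> (L r) (Pt r)" if r: "r \<in> {0..1}" for r
    unfolding planar_curve_def
  proof
    fix e assume e: "e \<in> E - C"
    have "P (t e) = P (s e) + len e *\<^sub>R rvec (\<sigma> e)"
      using lift e unfolding is_lift_def planar_curve_def by blast
    moreover have "Pos r (t e) - Pos r (s e) - L r e *\<^sub>R rvec (\<sigma> e)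
        = pos (t e) - pos (s e) - len e *\<^sub>R rvec (\<sigma> e)"
      using e r ends_in_vertices
      by (intro torus_deformation_edge_offset_constant[OF deform]) auto
    moreover have "0 < L r e"
      using deform e r unfolding torus_deformation_def torus_curve_def by blast
    ultimately show "0 < L r e \<and> Pt r (t e) = Pt r (s e) + L r e *\<^sub>R rvec (\<sigma> e)"
      unfolding Pt_def by (simp add: algebra_simps)
  qed
  show "planar_deformation V (E - C) s t \<sigma> len P L Pt"
    using deform planar unfolding planar_deformation_def torus_deformation_def Pt_def
    by (auto intro!: continuous_intros)
  show "\<forall>r\<in>{0..1}. is_lift u v V E s t \<sigma> C (L r) (Pos r) (L r) (Pt r)"
    using planar lift unfolding is_lift_def Pt_def by (auto simp: algebra_simps)
  show "deform_within V (E - C) eps len P L Pt" if "deform_within V E eps len pos L Pos"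
    using that unfolding deform_within_def Pt_def by auto
qed

lemma torus_deformation_lift_edge_eq:
  assumes deform: "torus_deformation u v V E s t \<sigma> len pos L Pos"
    and planar: "planar_deformation V (E - C) s t \<sigma> len P Lt Pt"
    and lifts: "\<forall>r\<in>{0..1}. is_lift u v V E s t \<sigma> C (L r) (Pos r) (Lt r) (Pt r)"
    and e: "e \<in> E" and r: "r \<in> {0..1}"
  shows "Pt r (t e) - Pt r (s e) + cut_gap e = L r e *\<^sub>R rvec (\<sigma> e)"
proof -
  have offset: "Pt r w = Pos r w + (P w - pos w)" if w: "w \<in> V" for w
  proof -
    let ?offset = "\<lambda>r. Pt r w - Pos r w"
    have "continuous_on {0..1} ?offset"
      using deform planar w unfolding torus_deformation_def planar_deformation_def
      by (auto intro!: continuous_intros)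
    moreover have "?offset ` {0..1} \<subseteq> lattice u v"
      using lifts w unfolding is_lift_def by auto
    ultimately have "?offset r = ?offset 0"
      using r by (rule lattice_path_constant)
    then show ?thesis
      using deform planar w unfolding torus_deformation_def planar_deformation_def
      by (simp add: algebra_simps)
  qed
  have "Pos r (t e) - Pos r (s e) - L r e *\<^sub>R rvec (\<sigma> e)
      = pos (t e) - pos (s e) - len e *\<^sub>R rvec (\<sigma> e)"
    using e r ends_in_vertices by (intro torus_deformation_edge_offset_constant[OF deform]) auto
  then show ?thesis
    using ends_in_vertices[OF e] unfolding cut_gap_def by (simp add: offset algebra_simps)
qed

text \<open>On a cut edge this is the coefficient of Pt r (t e) - Pt r (s e) + cut_gap e along the
  slope: the length of e in Gamma once that vector is parallel to the slope.\<close>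
definition descended_length :: "(real \<Rightarrow> 'e \<Rightarrow> real) \<Rightarrow> (real \<Rightarrow> 'v \<Rightarrow> vec) \<Rightarrow> real \<Rightarrow> 'e \<Rightarrow> real"
  where "descended_length Lt Pt r e =
    (if e \<in> C then inner (rvec (\<sigma> e)) (Pt r (t e) - Pt r (s e) + cut_gap e)
                      / inner (rvec (\<sigma> e)) (rvec (\<sigma> e))
     else Lt r e)"

lemma descended_length_cut_pos:
  assumes "e \<in> C" "\<sigma> e \<noteq> 0" "2 * eps \<le> len e"
    and "norm (Pt r (s e) - P (s e)) < eps" "norm (Pt r (t e) - P (t e)) < eps"
  shows "0 < descended_length Lt Pt r e"
proof -
  let ?n = "rvec (\<sigma> e)"
  have "norm (Pt r (t e) - Pt r (s e) + cut_gap e - len e *\<^sub>R ?n)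
      = norm ((Pt r (t e) - P (t e)) - (Pt r (s e) - P (s e)))"
    unfolding cut_gap_def by (simp add: algebra_simps)
  also have "\<dots> < 2 * eps"
    using norm_triangle_ineq4[of "Pt r (t e) - P (t e)" "Pt r (s e) - P (s e)"] assms(4,5)
    by linarith
  also have "\<dots> \<le> len e * norm ?n"
  proof -
    have "0 \<le> len e"
      using assms(3,4) norm_ge_zero[of "Pt r (s e) - P (s e)"] by linarith
    then have "len e * 1 \<le> len e * norm ?n"
      by (rule mult_left_mono[OF one_le_norm_rvec[OF assms(2)]])
    with assms(3) show ?thesis by simp
  qed
  finally have "0 < inner ?n (Pt r (t e) - Pt r (s e) + cut_gap e)"
    by (rule inner_pos_if_near_multiple)
  moreover have "0 < inner ?n ?n"
    using assms(2) by simp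
  ultimately show ?thesis
    using assms(1) unfolding descended_length_def by simp
qed

lemma descended_length_edge_eq:
  assumes planar: "planar_deformation V (E - C) s t \<sigma> len P Lt Pt"
    and nonzero: "\<And>e. e \<in> C \<Longrightarrow> \<sigma> e \<noteq> 0"
    and parallel: "\<And>e. e \<in> C \<Longrightarrow> det2 (rvec (\<sigma> e)) (Pt r (t e) - Pt r (s e) + cut_gap e) = 0"
    and e: "e \<in> E" and r: "r \<in> {0..1}"
  shows "Pt r (t e) - Pt r (s e) + cut_gap e = descended_length Lt Pt r e *\<^sub>R rvec (\<sigma> e)"
proof (cases "e \<in> C")
  case True
  then show ?thesis
    using det2_eq_0_imp_parallel[OF parallel] nonzero unfolding descended_length_def by simp
next
  case False
  with e r planar have "Pt r (t e) = Pt r (s e) + Lt r e *\<^sub>R rvec (\<sigma> e)"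
    unfolding planar_deformation_def planar_curve_def by blast
  with False e show ?thesis
    unfolding descended_length_def by (simp add: cut_gap_uncut)
qed

lemma descended_torus_curve:
  assumes planar: "planar_deformation V (E - C) s t \<sigma> len P Lt Pt"
    and small: "deform_within V (E - C) eps len P Lt Pt"
    and nonzero: "\<And>e. e \<in> C \<Longrightarrow> \<sigma> e \<noteq> 0"
    and margin: "\<And>e. e \<in> C \<Longrightarrow> 2 * eps \<le> len e"
    and parallel: "\<And>e. e \<in> C \<Longrightarrow> det2 (rvec (\<sigma> e)) (Pt r (t e) - Pt r (s e) + cut_gap e) = 0"
    and r: "r \<in> {0..1}"
  shows "torus_curve u v V E s t \<sigma> (descended_length Lt Pt r) (\<lambda>w. Pt r w - (P w - pos w))"
  unfolding torus_curve_def
proof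
  fix e assume e: "e \<in> E"
  have "0 < descended_length Lt Pt r e"
  proof (cases "e \<in> C")
    case True
    then show ?thesis
      using small r ends_in_vertices[OF e] nonzero[OF True] margin[OF True]
      unfolding deform_within_def by (intro descended_length_cut_pos) auto
  next
    case False
    then show ?thesis
      using planar r e unfolding descended_length_def planar_deformation_def planar_curve_def
      by auto
  qed
  moreover have "Pt r (t e) - (P (t e) - pos (t e)) - (Pt r (s e) - (P (s e) - pos (s e)))
      - descended_length Lt Pt r e *\<^sub>R rvec (\<sigma> e) = pos (t e) - pos (s e) - len e *\<^sub>R rvec (\<sigma> e)"
    using descended_length_edge_eq[OF planar nonzero parallel e r, symmetric]
    unfolding cut_gap_def by (simp add: algebra_simps)
  moreover have "pos (t e) - pos (s e) - len e *\<^sub>R rvec (\<sigma> e) \<in> lattice u v"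
    using curve e unfolding torus_curve_def by blast
  ultimately show "0 < descended_length Lt Pt r e \<and>
      Pt r (t e) - (P (t e) - pos (t e)) - (Pt r (s e) - (P (s e) - pos (s e)))
      - descended_length Lt Pt r e *\<^sub>R rvec (\<sigma> e) \<in> lattice u v"
    by (simp only:)
qed

lemma descended_deformation:
  assumes planar: "planar_deformation V (E - C) s t \<sigma> len P Lt Pt"
    and small: "deform_within V (E - C) eps len P Lt Pt"
    and nonzero: "\<And>e. e \<in> C \<Longrightarrow> \<sigma> e \<noteq> 0"
    and margin: "\<And>e. e \<in> C \<Longrightarrow> 2 * eps \<le> len e"
    and parallel: "\<And>r e. r \<in> {0..1} \<Longrightarrow> e \<in> C \<Longrightarrow>
      det2 (rvec (\<sigma> e)) (Pt r (t e) - Pt r (s e) + cut_gap e) = 0"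
  defines "Pos \<equiv> \<lambda>r w. Pt r w - (P w - pos w)"
  shows "torus_deformation u v V E s t \<sigma> len pos (descended_length Lt Pt) Pos"
    and "\<forall>r\<in>{0..1}. is_lift u v V E s t \<sigma> C (descended_length Lt Pt r) (Pos r) (Lt r) (Pt r)"
proof -
  have Pt: "continuous_on {0..1} (\<lambda>r. Pt r w)" "Pt 0 w = P w" if "w \<in> V" for w
    using planar that unfolding planar_deformation_def by auto
  have Lt: "continuous_on {0..1} (\<lambda>r. Lt r e)" "Lt 0 e = len e" if "e \<in> E - C" for e
    using planar that unfolding planar_deformation_def by auto
  have "continuous_on {0..1} (\<lambda>r. descended_length Lt Pt r e) \<and> descended_length Lt Pt 0 e = len e"
    if e: "e \<in> E" for e
  proof (cases "e \<in> C")
    case True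
    have "rvec (\<sigma> e) \<noteq> 0"
      using nonzero[OF True] by simp
    then show ?thesis
      using True ends_in_vertices[OF e] Pt
      unfolding descended_length_def cut_gap_def
      by (auto intro!: continuous_intros simp: inner_diff_right inner_add_right)
  next
    case False
    then show ?thesis
      using e Lt unfolding descended_length_def by simp
  qed
  then show "torus_deformation u v V E s t \<sigma> len pos (descended_length Lt Pt) Pos"
    using Pt descended_torus_curve[OF planar small nonzero margin parallel]
    unfolding torus_deformation_def Pos_def by (auto intro!: continuous_intros)
  show "\<forall>r\<in>{0..1}. is_lift u v V E s t \<sigma> C (descended_length Lt Pt r) (Pos r) (Lt r) (Pt r)"
    using planar lift unfolding planar_deformation_def is_lift_def descended_length_def Pos_def
    by auto
qed

lemma descends_iff_cut_edges_parallel: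
  assumes planar: "planar_deformation V (E - C) s t \<sigma> len P Lt Pt"
    and small: "deform_within V (E - C) eps len P Lt Pt"
    and nonzero: "\<And>e. e \<in> C \<Longrightarrow> \<sigma> e \<noteq> 0"
    and margin: "\<And>e. e \<in> C \<Longrightarrow> 2 * eps \<le> len e"
  shows "(\<exists>L Pos. torus_deformation u v V E s t \<sigma> len pos L Pos \<and>
            (\<forall>r\<in>{0..1}. is_lift u v V E s t \<sigma> C (L r) (Pos r) (Lt r) (Pt r)))
    \<longleftrightarrow> (\<forall>r\<in>{0..1}. \<forall>e\<in>C. det2 (rvec (\<sigma> e)) (Pt r (t e) - Pt r (s e) + cut_gap e) = 0)"
proof
  assume "\<exists>L Pos. torus_deformation u v V E s t \<sigma> len pos L Pos \<and>
            (\<forall>r\<in>{0..1}. is_lift u v V E s t \<sigma> C (L r) (Pos r) (Lt r) (Pt r))"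
  then obtain L Pos where deform: "torus_deformation u v V E s t \<sigma> len pos L Pos"
    and lifts: "\<forall>r\<in>{0..1}. is_lift u v V E s t \<sigma> C (L r) (Pos r) (Lt r) (Pt r)"
    by blast
  show "\<forall>r\<in>{0..1}. \<forall>e\<in>C. det2 (rvec (\<sigma> e)) (Pt r (t e) - Pt r (s e) + cut_gap e) = 0"
    using torus_deformation_lift_edge_eq[OF deform planar lifts] cut_subset by auto
next
  assume "\<forall>r\<in>{0..1}. \<forall>e\<in>C. det2 (rvec (\<sigma> e)) (Pt r (t e) - Pt r (s e) + cut_gap e) = 0"
  then show "\<exists>L Pos. torus_deformation u v V E s t \<sigma> len pos L Pos \<and>
            (\<forall>r\<in>{0..1}. is_lift u v V E s t \<sigma> C (L r) (Pos r) (Lt r) (Pt r))"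
    using descended_deformation[OF planar small nonzero margin] by blast
qed

lemma small_torus_deformations_lift:
  "\<forall>eps>0. \<exists>dlt>0. \<forall>L Pos.
      torus_deformation u v V E s t \<sigma> len pos L Pos \<and> deform_within V E dlt len pos L Pos \<longrightarrow>
      (\<exists>Lt Pt. planar_deformation V (E - C) s t \<sigma> len P Lt Pt \<and>
               deform_within V (E - C) eps len P Lt Pt \<and>
               (\<forall>r\<in>{0..1}. is_lift u v V E s t \<sigma> C (L r) (Pos r) (Lt r) (Pt r)))"
  using lift_torus_deformation by blast

lemma descends_iff_moment_condition:
  assumes "C = cut_edges x qe" and loops: "\<forall>i<x. loop_class u v E s t \<sigma> len x qe i (\<gamma> i)"
    and planar: "planar_deformation V (E - C) s t \<sigma> len P Lt Pt"
    and small: "deform_within V (E - C) eps len P Lt Pt"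
    and nonzero: "\<And>e. e \<in> C \<Longrightarrow> \<sigma> e \<noteq> 0"
    and margin: "\<And>e. e \<in> C \<Longrightarrow> 2 * eps \<le> len e"
  shows "(\<exists>L Pos. torus_deformation u v V E s t \<sigma> len pos L Pos \<and>
            (\<forall>r\<in>{0..1}. is_lift u v V E s t \<sigma> C (L r) (Pos r) (Lt r) (Pt r)))
    \<longleftrightarrow> (\<forall>r\<in>{0..1}. \<forall>i<x.
          det2 (rvec (\<sigma> (qe i))) (Pt r (s (qe i))) + det2 (- rvec (\<sigma> (qe i))) (Pt r (t (qe i)))
          = det2 (rvec (\<sigma> (qe i))) (Smap u v (\<gamma> i)))"
proof -
  have gap: "Smap u v (\<gamma> i) = cut_gap (qe i)" if "i < x" for i
    using loop_class_cut_gap[OF assms(1)] loops that by blast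
  have "(\<exists>L Pos. torus_deformation u v V E s t \<sigma> len pos L Pos \<and>
            (\<forall>r\<in>{0..1}. is_lift u v V E s t \<sigma> C (L r) (Pos r) (Lt r) (Pt r)))
    \<longleftrightarrow> (\<forall>r\<in>{0..1}. \<forall>e\<in>C. det2 (rvec (\<sigma> e)) (Pt r (t e) - Pt r (s e) + cut_gap e) = 0)"
    by (rule descends_iff_cut_edges_parallel[OF planar small nonzero margin])
  also have "\<dots> \<longleftrightarrow> (\<forall>r\<in>{0..1}. \<forall>i<x.
      det2 (rvec (\<sigma> (qe i))) (Pt r (t (qe i)) - Pt r (s (qe i)) + cut_gap (qe i)) = 0)"
    by (auto simp: assms(1) cut_edges_def)
  also have "\<dots> \<longleftrightarrow> (\<forall>r\<in>{0..1}. \<forall>i<x.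
      det2 (rvec (\<sigma> (qe i))) (Pt r (s (qe i))) + det2 (- rvec (\<sigma> (qe i))) (Pt r (t (qe i)))
      = det2 (rvec (\<sigma> (qe i))) (Smap u v (\<gamma> i)))"
    using gap by (simp add: det2_moment_eq_iff)
  finally show ?thesis .
qed

end

theorem mainTheorem4:
  fixes u v :: vec
    and V :: "'v set" and E :: "'e set" and s t :: "'e \<Rightarrow> 'v"
    and \<sigma> :: "'e \<Rightarrow> int \<times> int"
    and len :: "'e \<Rightarrow> real" and pos :: "'v \<Rightarrow> vec"
    and x :: nat and qe :: "nat \<Rightarrow> 'e" and qt :: "nat \<Rightarrow> real"
    and \<gamma> :: "nat \<Rightarrow> int \<times> int"
    and P :: "'v \<Rightarrow> vec"
  assumes S: "det2 u v \<noteq> 0"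
    and ty: "trop_type V E s t \<sigma>"
    and conn: "connected_graph V E s t"
    and nc: "no_contracted_edges E \<sigma>"
    and h: "torus_curve u v V E s t \<sigma> len pos"
    and Q: "lifting_set V E s t \<sigma> len x qe qt"
    and lift: "is_lift u v V E s t \<sigma> (cut_edges x qe) len pos len P"
    and gam: "\<forall>i<x. loop_class u v E s t \<sigma> len x qe i (\<gamma> i)"
  shows
    "(\<forall>eps>0. \<exists>dlt>0. \<forall>L Pos.
        torus_deformation u v V E s t \<sigma> len pos L Pos \<and> deform_within V E dlt len pos L Pos \<longrightarrow>
        (\<exists>Lt Pt. planar_deformation V (E - cut_edges x qe) s t \<sigma> len P Lt Pt \<and>
                 deform_within V (E - cut_edges x qe) eps len P Lt Pt \<and>
                 (\<forall>r\<in>{0..1}. is_lift u v V E s t \<sigma> (cut_edges x qe) (L r) (Pos r) (Lt r) (Pt r))))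
     \<and>
     (\<exists>eps>0. \<forall>Lt Pt.
        planar_deformation V (E - cut_edges x qe) s t \<sigma> len P Lt Pt \<and>
        deform_within V (E - cut_edges x qe) eps len P Lt Pt \<longrightarrow>
        ((\<exists>L Pos. torus_deformation u v V E s t \<sigma> len pos L Pos \<and>
                  (\<forall>r\<in>{0..1}. is_lift u v V E s t \<sigma> (cut_edges x qe) (L r) (Pos r) (Lt r) (Pt r)))
         \<longleftrightarrow>
         (\<forall>r\<in>{0..1}. \<forall>i<x.
            det2 (rvec (\<sigma> (qe i))) (Pt r (s (qe i))) + det2 (- rvec (\<sigma> (qe i))) (Pt r (t (qe i)))
            = det2 (rvec (\<sigma> (qe i))) (Smap u v (\<gamma> i)))))"
proof -
  let ?C = "cut_edges x qe"
  have cut_subset: "?C \<subseteq> E" and finite_cut: "finite ?C"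
    using Q unfolding lifting_set_def cut_edges_def by auto
  interpret lifted_torus_curve u v V E s t \<sigma> ?C len pos P
    using ty cut_subset h lift by unfold_locales (auto simp: trop_type_def)
  have nonzero: "\<And>e. e \<in> ?C \<Longrightarrow> \<sigma> e \<noteq> 0"
    using nc cut_subset unfolding no_contracted_edges_def by blast
  have "\<exists>m>0. \<forall>e\<in>?C. m \<le> len e / 2"
    using cut_subset h unfolding torus_curve_def
    by (intro finite_positive_lower_bound[OF finite_cut]) auto
  then obtain eps where "eps > 0" and margin: "\<And>e. e \<in> ?C \<Longrightarrow> 2 * eps \<le> len e"
    by force
  show ?thesis
    using descends_iff_moment_condition[OF refl gam _ _ nonzero margin] \<open>eps > 0\<close>
    by (intro conjI small_torus_deformations_lift exI[of _ eps]) blast+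
qed

end
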